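(* Fix a time frame $t$ and a time slot $\tau\in\{tK,tK+1,\dots,tK+K-1\}$, and consider the setting described in the context, with all data fixed except the decision variables of the respective problem. Then each of the following four optimization problems is a convex optimization problem, i.e. its feasible set is convex and its objective function is convex on it. $\mathcal{P}_{5-1}$ (variables $y_i(\tau)\in[0,1]$, $i\in\mathcal I$; $b_i(\tau),f_i(\tau),z_i(\tau)$ fixed): minimize $\sum_{i\in\mathcal I}H_i(\tau)z_i(\tau)\sum_{m\in\mathcal M}\big(T^{ul}_{i,m}(\tau)+T^{ud}_{i,m}(\tau)\big)+E(\tau)\sum_{i\in\mathcal I}\sum_{m\in\mathcal M}z_i(\tau)\big(E^{ul}_{i,m}(\tau)+E^{ud}_{i,m}(\tau)\big)-V\sum_{i\in\mathcal I}A_i(\tau)$. $\mathcal{P}_{5-2}$ (variables $b_i(\tau)\in(0,1]$, $i\in\mathcal I$; $y_i(\tau),f_i(\tau),z_i(\tau)$ fixed): minimize $\sum_{i\in\mathcal I}H_i(\tau)z_i(\tau)\sum_{m\in\mathcal M}\big(T^{ul}_{i,m}(\tau)+T^{ofld}_{i,m}(\tau)\big)+E(\tau)\sum_{i\in\mathcal I}\sum_{m\in\mathcal M}z_i(\tau)\big(E^{ul}_{i,m}(\tau)+E^{ofld}_{i,m}(\tau)\big)$ subject to $\sum_{i\in\mathcal I}a_{i,m}(t)b_i(\tau)\le 1$ for all $m\in\mathcal M$. $\mathcal{P}_{5-3}$ (variables $f_i(\tau)\in(0,1]$, $i\in\mathcal I$; $y_i(\tau),b_i(\tau),z_i(\tau)$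 fixed): minimize $\sum_{i\in\mathcal I}H_i(\tau)\Big(\sum_{m\in\mathcal M}T^{pl}_{i,m}(t)/K+z_i(\tau)\sum_{m\in\mathcal M}T^{ud}_{i,m}(\tau)+T^{exec}_i(\tau)\Big)+E(\tau)\sum_{i\in\mathcal I}\Big(\sum_{m\in\mathcal M}E^{pl}_{i,m}(t)/K+\sum_{m\in\mathcal M}z_i(\tau)E^{ud}_{i,m}(\tau)+E^{exec}_i(\tau)\Big)$ subject to $\sum_{i\in\mathcal I}a_{i,m}(t)f_i(\tau)\le 1$ for all $m\in\mathcal M$. $\mathcal{P}_{5-4}$ (variables $z_i(\tau)\in[0,1]$, $i\in\mathcal I$; $y_i(\tau),b_i(\tau),f_i(\tau)$ fixed): minimize $\sum_{i\in\mathcal I}H_i(\tau)\Big[z_i(\tau)\sum_{m\in\mathcal M}\big(T^{ul}_{i,m}(\tau)+T^{ud}_{i,m}(\tau)+T^{ofld}_{i,m}(\tau)\big)+T^{exec}_i(\tau)\Big]+E(\tau)\sum_{i\in\mathcal I}\Big[\sum_{m\in\mathcal M}z_i(\tau)\big(E^{ul}_{i,m}(\tau)+E^{ud}_{i,m}(\tau)+E^{ofld}_{i,m}(\tau)\big)+E^{exec}_i(\tau)\Big]-V\sum_{i\in\mathcal I}A_i(\tau)$.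
   Context: Finite sets $\mathcal I$ (users, "physical twins") and $\mathcal M$ (edge servers). $K$ is a positive integer. Fixed nonnegative constants: queue backlogs $H_i(\tau)\ge0$ ($i\in\mathcal I$) and $E(\tau)\ge 0$; $V>0$. Fixed access indicators $a_{i,m}(t)\in\{0,1\}$ with $\sum_{m}a_{i,m}(t)\le 1$ for each $i$, and fixed granularities $x_i(t)\in[0,1]$. Positive constants: $D_i(t),S_i(\tau),\lambda_i(\tau),p_i,C_i,F_i,\rho_i$ for $i\in\mathcal I$; $C_m,F_m,\rho_m,B_m$ for $m\in\mathcal M$; $N_0>0$; distances $S_{i,m}(\tau)>0$; path-loss exponent $\theta\ge 2$; complex fading coefficients $h_{i,m}(\tau)$; a constant $g_i^{local}\in[0,1]$. The decision variables (when not optimized in the given problem they are fixed constants in the same ranges) are $y_i(\tau)\in[0,1]$, $b_i(\tau)\in(0,1]$, $f_i(\tau)\in(0,1]$, $z_i(\tau)\in[0,1]$. The quantity $f_i(tK)$ equals the variable $f_i(\tau)$ if $\tau=tK$, and is otherwise a fixed constant in $(0,1]$. Definitions: transmission rate $r_{i,m}(\tau)=a_{i,m}(t)b_i(\tau)B_m\log\!\Big(1+\frac{(S_{i,m}(\tau))^\theta p_i|h_{i,m}(\tau)|^2}{N_0 b_i(\tau)B_m}\Big)$; $T^{ul}_{i,m}(\tau)=\frac{y_i(\tau)S_i(\tau)}{r_{i,m}(\tau)}$, $E^{ul}_{i,m}(\tau)=p_iT^{ul}_{i,m}(\tau)$; $T^{ofld}_{i,m}(\tau)=\frac{\lambda_i(\tau)}{r_{i,m}(\tau)}$,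 $E^{ofld}_{i,m}(\tau)=p_iT^{ofld}_{i,m}(\tau)$; (convention: when $a_{i,m}(t)=0$, the terms $T^{ul}_{i,m},E^{ul}_{i,m},T^{ofld}_{i,m},E^{ofld}_{i,m}$ are taken to be $0$); $T^{ud}_{i,m}(\tau)=\frac{a_{i,m}(t)y_i(\tau)S_i(\tau)C_m}{f_i(\tau)F_m}$, $E^{ud}_{i,m}(\tau)=\rho_mf_i(\tau)F_m^3T^{ud}_{i,m}(\tau)$; $T^{pl}_{i,m}(t)=\frac{a_{i,m}(t)x_i(t)D_i(t)C_m}{f_i(tK)F_m}$, $E^{pl}_{i,m}(t)=\rho_mf_i(tK)F_m^3T^{pl}_{i,m}(t)$; $T^{exec}_i(\tau)=\sum_{m}a_{i,m}(t)z_i(\tau)\frac{\lambda_i(\tau)C_m}{f_i(\tau)F_m}+(1-z_i(\tau))\frac{\lambda_i(\tau)C_i}{F_i}$; $E^{exec}_i(\tau)=\sum_m a_{i,m}(t)z_i(\tau)\rho_mF_m^2\lambda_i(\tau)C_m+(1-z_i(\tau))\rho_iF_i^2\lambda_i(\tau)C_i$; accuracy $A_i(\tau)=z_i(\tau)g_i^{edge}(d_i(\tau))+(1-z_i(\tau))g_i^{local}$ with $d_i(\tau)=x_i(t)D_i(t)+y_i(\tau)S_i(\tau)$ and $g_i^{edge}(d)=1-\big(1-\frac{d}{D_i(t)+S_i(\tau)}\big)^2$. *)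

theory Defs
  imports "HOL-Analysis.Analysis"
begin

text \<open>System data for one fixed time frame t and slot tau. Users are the finite
type 'i, edge servers the finite type 'm. All quantities indexed by t or tau are
the (fixed) values at that frame / slot.\<close>

record ('i, 'm) dt_sys =
  sK     :: nat
  sH     :: "'i \<Rightarrow> real"
  sE     :: real
  sV     :: real
  sa     :: "'i \<Rightarrow> 'm \<Rightarrow> real"
  sx     :: "'i \<Rightarrow> real"
  sD     :: "'i \<Rightarrow> real"
  sS     :: "'i \<Rightarrow> real"
  slam   :: "'i \<Rightarrow> real"
  sp     :: "'i \<Rightarrow> real"
  sCi    :: "'i \<Rightarrow> real"
  sFi    :: "'i \<Rightarrow> real"
  srhoi  :: "'i \<Rightarrow> real"
  sCm    :: "'m \<Rightarrow> real"
  sFm    :: "'m \<Rightarrow> real"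
  srhom  :: "'m \<Rightarrow> real"
  sB     :: "'m \<Rightarrow> real"
  sN0    :: real
  sdist  :: "'i \<Rightarrow> 'm \<Rightarrow> real"        \<comment> \<open>S_{i,m}(tau)\<close>
  stheta :: real
  sh     :: "'i \<Rightarrow> 'm \<Rightarrow> complex"
  sgloc  :: "'i \<Rightarrow> real"
  sfK    :: "'i \<Rightarrow> real"                \<comment> \<open>fixed value of f_i(tK) when tau is not tK\<close>

definition standing :: "('i, 'm) dt_sys \<Rightarrow> bool" where
  "standing P \<longleftrightarrow>
     sK P > 0 \<and> (\<forall>i. sH P i \<ge> 0) \<and> sE P \<ge> 0 \<and> sV P > 0 \<and>
     (\<forall>i m. sa P i m = 0 \<or> sa P i m = 1) \<and> (\<forall>i. (\<Sum>m\<in>UNIV. sa P i m) \<le> 1) \<and>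
     (\<forall>i. 0 \<le> sx P i \<and> sx P i \<le> 1) \<and>
     (\<forall>i. sD P i > 0 \<and> sS P i > 0 \<and> slam P i > 0 \<and> sp P i > 0 \<and>
          sCi P i > 0 \<and> sFi P i > 0 \<and> srhoi P i > 0) \<and>
     (\<forall>m. sCm P m > 0 \<and> sFm P m > 0 \<and> srhom P m > 0 \<and> sB P m > 0) \<and>
     sN0 P > 0 \<and> (\<forall>i m. sdist P i m > 0) \<and> stheta P \<ge> 2 \<and>
     (\<forall>i. 0 \<le> sgloc P i \<and> sgloc P i \<le> 1) \<and>
     (\<forall>i. 0 < sfK P i \<and> sfK P i \<le> 1)"

text \<open>Transmission rate r_{i,m}(tau) as a function of b_i(tau) (natural log).\<close>
definition rate :: "('i, 'm) dt_sys \<Rightarrow> real \<Rightarrow> 'i \<Rightarrow> 'm \<Rightarrow> real" where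
  "rate P b i m = sa P i m * b * sB P m *
     ln (1 + (sdist P i m) powr (stheta P) * sp P i * (cmod (sh P i m))\<^sup>2 / (sN0 P * b * sB P m))"

definition Tul :: "('i, 'm) dt_sys \<Rightarrow> real \<Rightarrow> real \<Rightarrow> 'i \<Rightarrow> 'm \<Rightarrow> real" where
  "Tul P y b i m = (if sa P i m = 0 then 0 else y * sS P i / rate P b i m)"

definition Eul :: "('i, 'm) dt_sys \<Rightarrow> real \<Rightarrow> real \<Rightarrow> 'i \<Rightarrow> 'm \<Rightarrow> real" where
  "Eul P y b i m = (if sa P i m = 0 then 0 else sp P i * Tul P y b i m)"

definition Tofld :: "('i, 'm) dt_sys \<Rightarrow> real \<Rightarrow> 'i \<Rightarrow> 'm \<Rightarrow> real" where
  "Tofld P b i m = (if sa P i m = 0 then 0 else slam P i / rate P b i m)"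

definition Eofld :: "('i, 'm) dt_sys \<Rightarrow> real \<Rightarrow> 'i \<Rightarrow> 'm \<Rightarrow> real" where
  "Eofld P b i m = (if sa P i m = 0 then 0 else sp P i * Tofld P b i m)"

definition Tud :: "('i, 'm) dt_sys \<Rightarrow> real \<Rightarrow> real \<Rightarrow> 'i \<Rightarrow> 'm \<Rightarrow> real" where
  "Tud P y f i m = sa P i m * y * sS P i * sCm P m / (f * sFm P m)"

definition Eud :: "('i, 'm) dt_sys \<Rightarrow> real \<Rightarrow> real \<Rightarrow> 'i \<Rightarrow> 'm \<Rightarrow> real" where
  "Eud P y f i m = srhom P m * f * (sFm P m)^3 * Tud P y f i m"

text \<open>T^pl and E^pl, as functions of the value fK = f_i(tK).\<close>
definition Tpl :: "('i, 'm) dt_sys \<Rightarrow> real \<Rightarrow> 'i \<Rightarrow> 'm \<Rightarrow> real" where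
  "Tpl P fK i m = sa P i m * sx P i * sD P i * sCm P m / (fK * sFm P m)"

definition Epl :: "('i, 'm) dt_sys \<Rightarrow> real \<Rightarrow> 'i \<Rightarrow> 'm \<Rightarrow> real" where
  "Epl P fK i m = srhom P m * fK * (sFm P m)^3 * Tpl P fK i m"

definition Texec :: "('i::finite, 'm::finite) dt_sys \<Rightarrow> real \<Rightarrow> real \<Rightarrow> 'i \<Rightarrow> real" where
  "Texec P z f i = (\<Sum>m\<in>UNIV. sa P i m * z * (slam P i * sCm P m / (f * sFm P m)))
                   + (1 - z) * (slam P i * sCi P i / sFi P i)"

definition Eexec :: "('i::finite, 'm::finite) dt_sys \<Rightarrow> real \<Rightarrow> 'i \<Rightarrow> real" where
  "Eexec P z i = (\<Sum>m\<in>UNIV. sa P i m * z * srhom P m * (sFm P m)^2 * slam P i * sCm P m)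
                 + (1 - z) * srhoi P i * (sFi P i)^2 * slam P i * sCi P i"

definition g_edge :: "('i, 'm) dt_sys \<Rightarrow> 'i \<Rightarrow> real \<Rightarrow> real" where
  "g_edge P i d = 1 - (1 - d / (sD P i + sS P i))\<^sup>2"

definition acc :: "('i, 'm) dt_sys \<Rightarrow> real \<Rightarrow> real \<Rightarrow> 'i \<Rightarrow> real" where
  "acc P y z i = z * g_edge P i (sx P i * sD P i + y * sS P i) + (1 - z) * sgloc P i"

definition fTK :: "('i, 'm) dt_sys \<Rightarrow> nat \<Rightarrow> nat \<Rightarrow> real \<Rightarrow> 'i \<Rightarrow> real" where
  "fTK P t tau f i = (if tau = t * sK P then f else sfK P i)"

definition obj51 :: "('i::finite, 'm::finite) dt_sys \<Rightarrow> real^'i \<Rightarrow> real^'i \<Rightarrow> real^'i \<Rightarrow> real^'i \<Rightarrow> real" where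
  "obj51 P y b f z =
     (\<Sum>i\<in>UNIV. sH P i * z$i * (\<Sum>m\<in>UNIV. Tul P (y$i) (b$i) i m + Tud P (y$i) (f$i) i m))
     + sE P * (\<Sum>i\<in>UNIV. \<Sum>m\<in>UNIV. z$i * (Eul P (y$i) (b$i) i m + Eud P (y$i) (f$i) i m))
     - sV P * (\<Sum>i\<in>UNIV. acc P (y$i) (z$i) i)"

definition obj52 :: "('i::finite, 'm::finite) dt_sys \<Rightarrow> real^'i \<Rightarrow> real^'i \<Rightarrow> real^'i \<Rightarrow> real^'i \<Rightarrow> real" where
  "obj52 P y b f z =
     (\<Sum>i\<in>UNIV. sH P i * z$i * (\<Sum>m\<in>UNIV. Tul P (y$i) (b$i) i m + Tofld P (b$i) i m))
     + sE P * (\<Sum>i\<in>UNIV. \<Sum>m\<in>UNIV. z$i * (Eul P (y$i) (b$i) i m + Eofld P (b$i) i m))"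

definition obj53 :: "('i::finite, 'm::finite) dt_sys \<Rightarrow> nat \<Rightarrow> nat \<Rightarrow> real^'i \<Rightarrow> real^'i \<Rightarrow> real^'i \<Rightarrow> real^'i \<Rightarrow> real" where
  "obj53 P t tau y b f z =
     (\<Sum>i\<in>UNIV. sH P i *
        ((\<Sum>m\<in>UNIV. Tpl P (fTK P t tau (f$i) i) i m) / real (sK P)
         + z$i * (\<Sum>m\<in>UNIV. Tud P (y$i) (f$i) i m) + Texec P (z$i) (f$i) i))
     + sE P * (\<Sum>i\<in>UNIV.
        (\<Sum>m\<in>UNIV. Epl P (fTK P t tau (f$i) i) i m) / real (sK P)
         + (\<Sum>m\<in>UNIV. z$i * Eud P (y$i) (f$i) i m) + Eexec P (z$i) i)"

definition obj54 :: "('i::finite, 'm::finite) dt_sys \<Rightarrow> real^'i \<Rightarrow> real^'i \<Rightarrow> real^'i \<Rightarrow> real^'i \<Rightarrow> real" where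
  "obj54 P y b f z =
     (\<Sum>i\<in>UNIV. sH P i * (z$i * (\<Sum>m\<in>UNIV. Tul P (y$i) (b$i) i m + Tud P (y$i) (f$i) i m
                                             + Tofld P (b$i) i m) + Texec P (z$i) (f$i) i))
     + sE P * (\<Sum>i\<in>UNIV. (\<Sum>m\<in>UNIV. z$i * (Eul P (y$i) (b$i) i m + Eud P (y$i) (f$i) i m
                                             + Eofld P (b$i) i m)) + Eexec P (z$i) i)
     - sV P * (\<Sum>i\<in>UNIV. acc P (y$i) (z$i) i)"

definition feas_unit :: "(real^'i) set" where
  "feas_unit = {v. \<forall>i. 0 \<le> v$i \<and> v$i \<le> 1}"

definition feas_coupled :: "('i::finite, 'm::finite) dt_sys \<Rightarrow> (real^'i) set" where
  "feas_coupled P = {v. (\<forall>i. 0 < v$i \<and> v$i \<le> 1) \<and> (\<forall>m. (\<Sum>i\<in>UNIV. sa P i m * v$i) \<le> 1)}"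

end

theory Submission
  imports Defs
begin

text \<open>Every objective is a sum over users of a function of that user's own coordinate, and
  every feasible set is convex (a box, intersected with half-spaces in the coupled case), so
  convexity reduces to one real variable per user. In \<open>y\<close> and \<open>z\<close> the delay and energy
  terms are affine, and the accuracy is concave, since \<open>g_edge\<close> is a concave quadratic.
  In \<open>f\<close> every term has the form \<open>k / f + d\<close> with \<open>k \<ge> 0\<close>. In \<open>b\<close> the terms are
  \<open>k / r(b)\<close>, where \<open>r(b) = a b ln (1 + c / b)\<close> is the perspective of the concave function
  \<open>ln (1 + x)\<close>; it is therefore concave and positive, and its reciprocal is convex.\<close>

lemma convex_on_cong:
  assumes "convex_on S f" "\<And>x. x \<in> S \<Longrightarrow> g x = f x"
  shows "convex_on S g"
  using assms unfolding convex_on_def convex_def by simp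

lemma convex_on_sum_functions:
  assumes "finite I" "convex S" "\<And>i. i \<in> I \<Longrightarrow> convex_on S (f i)"
  shows "convex_on S (\<lambda>x. \<Sum>i\<in>I. f i x)"
  using assms by (induction I rule: finite_induct) (auto simp: convex_on_const)

lemma convex_on_vec_nth:
  fixes A :: "(real^'n) set"
  assumes "convex A" "convex_on S g" "\<And>v. v \<in> A \<Longrightarrow> v$i \<in> S"
  shows "convex_on A (\<lambda>v. g (v$i))"
proof (rule convex_onI)
  fix t :: real and x y assume "0 < t" "t < 1" "x \<in> A" "y \<in> A"
  then show "g (((1 - t) *\<^sub>R x + t *\<^sub>R y) $ i) \<le> (1 - t) * g (x$i) + t * g (y$i)"
    using convex_onD[OF assms(2)] assms(3) by simp
qed fact

lemma convex_on_sum_vec_nth: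
  fixes A :: "(real^'n) set"
  assumes "convex A" "\<And>i. convex_on S (g i)" "\<And>v i. v \<in> A \<Longrightarrow> v$i \<in> S"
  shows "convex_on A (\<lambda>v. \<Sum>i\<in>UNIV. g i (v$i))"
  using assms by (intro convex_on_sum_functions convex_on_vec_nth) auto

definition affine_fun :: "(real \<Rightarrow> real) \<Rightarrow> bool" where
  "affine_fun h \<longleftrightarrow> (\<forall>x y t. h ((1 - t) * x + t * y) = (1 - t) * h x + t * h y)"

lemma affine_fun_const: "affine_fun (\<lambda>x. c)"
  unfolding affine_fun_def by (simp add: algebra_simps)

lemma affine_fun_ident: "affine_fun (\<lambda>x. x)"
  unfolding affine_fun_def by simp

lemma affine_fun_add: "affine_fun f \<Longrightarrow> affine_fun g \<Longrightarrow> affine_fun (\<lambda>x. f x + g x)"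
  unfolding affine_fun_def by (simp add: distrib_left)

lemma affine_fun_diff: "affine_fun f \<Longrightarrow> affine_fun g \<Longrightarrow> affine_fun (\<lambda>x. f x - g x)"
  unfolding affine_fun_def by (simp add: right_diff_distrib)

lemma affine_fun_cmult:
  assumes "affine_fun f"
  shows "affine_fun (\<lambda>x. c * f x)"
  unfolding affine_fun_def
proof (intro allI)
  fix x y t :: real
  have "f ((1 - t) * x + t * y) = (1 - t) * f x + t * f y"
    using assms unfolding affine_fun_def by blast
  then show "c * f ((1 - t) * x + t * y) = (1 - t) * (c * f x) + t * (c * f y)"
    by (simp only:) (simp add: algebra_simps)
qed

lemma affine_fun_multc: "affine_fun f \<Longrightarrow> affine_fun (\<lambda>x. f x * c)"
  using affine_fun_cmult[of f c] by (simp add: mult.commute)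

lemma affine_fun_divide: "affine_fun f \<Longrightarrow> affine_fun (\<lambda>x. f x / c)"
  unfolding affine_fun_def by (simp add: add_divide_distrib)

lemma affine_fun_sum: "(\<And>i. affine_fun (f i)) \<Longrightarrow> affine_fun (\<lambda>x. \<Sum>i\<in>I. f i x)"
  unfolding affine_fun_def by (simp add: sum_distrib_left sum.distrib)

lemmas affine_fun_intros =
  affine_fun_const affine_fun_ident affine_fun_add affine_fun_diff
  affine_fun_cmult affine_fun_multc affine_fun_divide affine_fun_sum

lemma convex_on_affine_fun_compose:
  assumes "convex_on S f" "affine_fun h" "convex T" "h ` T \<subseteq> S"
  shows "convex_on T (\<lambda>x. f (h x))"
proof (rule convex_onI)
  fix t :: real and x y assume "0 < t" "t < 1" "x \<in> T" "y \<in> T"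
  moreover have "h ((1 - t) * x + t * y) = (1 - t) * h x + t * h y"
    using assms(2) unfolding affine_fun_def by blast
  ultimately show "f (h ((1 - t) *\<^sub>R x + t *\<^sub>R y)) \<le> (1 - t) * f (h x) + t * f (h y)"
    using convex_onD[OF assms(1), of t "h x" "h y"] assms(4) by auto
qed fact

lemma concave_on_affine_fun_compose:
  assumes "concave_on S f" "affine_fun h" "convex T" "h ` T \<subseteq> S"
  shows "concave_on T (\<lambda>x. f (h x))"
  using assms unfolding concave_on_def by (rule convex_on_affine_fun_compose)

lemma affine_fun_imp_convex_on:
  assumes "affine_fun h" "convex S"
  shows "convex_on S h"
  using convex_on_affine_fun_compose[OF convex_on_ident[THEN iffD2, OF convex_UNIV] assms]
  by simp

lemma concave_on_perspective:
  fixes f :: "real \<Rightarrow> real"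
  assumes f: "concave_on S f" and c: "\<And>x. 0 < x \<Longrightarrow> c / x \<in> S"
  shows "concave_on {0<..} (\<lambda>x. x * f (c / x))"
proof (rule concave_on_linorderI)
  fix t x y :: real
  assume t: "0 < t" "t < 1" and x: "x \<in> {0<..}" and y: "y \<in> {0<..}"
  define w where "w = (1 - t) * x + t * y"
  have w: "0 < w"
    using t x y unfolding w_def by (simp add: add_pos_pos)
  define \<beta> where "\<beta> = t * y / w"
  have \<beta>: "0 \<le> \<beta>" "\<beta> \<le> 1" "1 - \<beta> = (1 - t) * x / w"
    using t x y w unfolding \<beta>_def w_def by (auto simp: field_simps)
  have "c / w = (1 - \<beta>) * (c / x) + \<beta> * (c / y)"
    using x y w unfolding \<beta>(3) \<beta>_def by (simp add: field_simps) (simp add: w_def algebra_simps)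
  then have jensen: "(1 - \<beta>) * f (c / x) + \<beta> * f (c / y) \<le> f (c / w)"
    using concave_onD[OF f \<beta>(1,2) c c] x y by simp
  have w\<beta>: "w * (1 - \<beta>) = (1 - t) * x" "w * \<beta> = t * y"
    using w by (simp add: \<beta>(3), simp add: \<beta>_def)
  have "(1 - t) * (x * f (c / x)) + t * (y * f (c / y))
      = w * ((1 - \<beta>) * f (c / x) + \<beta> * f (c / y))"
    by (simp add: distrib_left flip: w\<beta> mult.assoc)
  also have "\<dots> \<le> w * f (c / w)"
    using jensen w by simp
  finally have "(1 - t) * (x * f (c / x)) + t * (y * f (c / y)) \<le> w * f (c / w)" .
  then show "(1 - t) * (x * f (c / x)) + t * (y * f (c / y))
      \<le> ((1 - t) *\<^sub>R x + t *\<^sub>R y) * f (c / ((1 - t) *\<^sub>R x + t *\<^sub>R y))"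
    by (simp add: w_def)
qed simp

lemma concave_on_mult_ln_one_plus_divide:
  assumes "0 \<le> c"
  shows "concave_on {0<..} (\<lambda>x::real. x * ln (1 + c / x))"
proof (rule concave_on_perspective)
  show "concave_on {0..} (\<lambda>x::real. ln (1 + x))"
    by (rule concave_on_affine_fun_compose[OF ln_concave]) (auto intro: affine_fun_intros)
qed (use assms in simp)

lemma convex_on_inverse_concave:
  fixes g :: "real \<Rightarrow> real"
  assumes g: "concave_on S g" and pos: "\<And>x. x \<in> S \<Longrightarrow> 0 < g x"
  shows "convex_on S (\<lambda>x. inverse (g x))"
proof (rule convex_onI)
  fix t x y :: real
  assume t: "0 < t" "t < 1" and xy: "x \<in> S" "y \<in> S"
  have mean_pos: "0 < (1 - t) * g x + t * g y"
    using t pos[OF xy(1)] pos[OF xy(2)] by (simp add: add_pos_pos)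
  have "inverse (g ((1 - t) *\<^sub>R x + t *\<^sub>R y)) \<le> inverse ((1 - t) * g x + t * g y)"
    using concave_onD[OF g _ _ xy, of t] t mean_pos by (simp add: le_imp_inverse_le)
  also have "\<dots> \<le> (1 - t) * inverse (g x) + t * inverse (g y)"
    using convex_onD[OF convex_on_inverse[of "{0<..}"], of t "g x" "g y"]
      t pos[OF xy(1)] pos[OF xy(2)] by simp
  finally show "inverse (g ((1 - t) *\<^sub>R x + t *\<^sub>R y)) \<le> (1 - t) * inverse (g x) + t * inverse (g y)" .
qed (rule concave_on_imp_convex[OF g])

lemma convex_on_const_divide:
  fixes c :: real
  assumes "0 \<le> c"
  shows "convex_on {0<..} (\<lambda>x. c / x)"
  unfolding divide_inverse using assms by (intro convex_on_cmul convex_on_inverse) auto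

lemma convex_on_divide_mult_ln:
  fixes k a c :: real
  assumes "0 \<le> k" "0 \<le> a" "0 \<le> c"
  shows "convex_on {0<..} (\<lambda>x. k / (a * (x * ln (1 + c / x))))"
proof (cases "a = 0 \<or> c = 0")
  case True
  \<comment> \<open>the denominator vanishes, so the function is constantly \<open>0\<close>\<close>
  then show ?thesis
    by (intro convex_on_cong[OF convex_on_const[THEN iffD2]]) auto
next
  case False
  with assms have a: "0 < a" and c: "0 < c" by auto
  have "convex_on {0<..} (\<lambda>x. (k / a) * inverse (x * ln (1 + c / x)))"
    using assms a c
    by (intro convex_on_cmul convex_on_inverse_concave concave_on_mult_ln_one_plus_divide)
       (auto intro!: mult_pos_pos ln_gt_zero)
  then show ?thesis
    by (rule convex_on_cong) (simp add: divide_inverse mult_ac)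
qed

lemma feas_unit_eq: "feas_unit = {v. \<forall>i. v$i \<in> {0..1}}"
  by (simp add: feas_unit_def)

lemma convex_feas_unit: "convex feas_unit"
  unfolding feas_unit_eq by (rule convex_box_cart) (simp only: Collect_mem_eq convex_real_interval)

lemma feas_coupled_eq:
  "feas_coupled P = {v. \<forall>i. v$i \<in> {0<..1}} \<inter> (\<Inter>m. {v. (\<chi> i. sa P i m) \<bullet> v \<le> 1})"
  by (auto simp: feas_coupled_def inner_vec_def)

lemma convex_feas_coupled: "convex (feas_coupled P)"
  unfolding feas_coupled_eq
  by (intro convex_Int convex_box_cart convex_INT convex_halfspace_le)
     (simp only: Collect_mem_eq convex_real_interval)

lemma standingD:
  assumes "standing P"
  shows "0 \<le> sH P i" "0 \<le> sE P" "0 \<le> sV P" "0 \<le> sa P i m" "0 \<le> sx P i"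
    "0 < sD P i" "0 < sS P i" "0 < slam P i" "0 < sp P i"
    "0 < sCm P m" "0 < sFm P m" "0 < srhom P m" "0 < sB P m" "0 < sN0 P" "0 < sfK P i"
  using assms unfolding standing_def by (auto, metis order.refl zero_le_one)

lemma rate_eq_mult_ln:
  assumes "standing P"
  obtains a c where "0 \<le> a" "0 \<le> c" "\<And>b. rate P b i m = a * (b * ln (1 + c / b))"
proof
  show "rate P b i m = (sa P i m * sB P m) *
      (b * ln (1 + sdist P i m powr stheta P * sp P i * (cmod (sh P i m))\<^sup>2 / (sN0 P * sB P m) / b))"
    for b by (simp add: rate_def mult_ac)
qed (use assms in \<open>auto simp: standingD less_imp_le intro!: mult_nonneg_nonneg divide_nonneg_pos\<close>)

lemma convex_on_divide_rate:
  assumes "standing P" "0 \<le> k"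
  shows "convex_on {0<..} (\<lambda>b. k / rate P b i m)"
proof -
  obtain a c where "0 \<le> a" "0 \<le> c" and rate: "\<And>b. rate P b i m = a * (b * ln (1 + c / b))"
    using rate_eq_mult_ln[OF assms(1), where i = i and m = m] by blast
  show ?thesis
    unfolding rate using assms(2) \<open>0 \<le> a\<close> \<open>0 \<le> c\<close> by (rule convex_on_divide_mult_ln)
qed

text \<open>No case split on \<open>sa P i m\<close> is needed: when it is \<open>0\<close> the rate is \<open>0\<close> too, and the
  convention that delay and energy then vanish coincides with \<open>x / 0 = 0\<close>.\<close>

lemma Tul_eq: "Tul P y b i m = y * sS P i / rate P b i m"
  by (simp add: Tul_def rate_def)

lemma Eul_eq: "Eul P y b i m = sp P i * (y * sS P i) / rate P b i m"
  by (simp add: Eul_def Tul_def rate_def)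

lemma Tofld_eq: "Tofld P b i m = slam P i / rate P b i m"
  by (simp add: Tofld_def rate_def)

lemma Eofld_eq: "Eofld P b i m = sp P i * slam P i / rate P b i m"
  by (simp add: Eofld_def Tofld_def rate_def)

lemma Tud_eq: "Tud P y f i m = sa P i m * y * sS P i * sCm P m / sFm P m / f"
  by (simp add: Tud_def mult.commute)

lemma Tpl_eq: "Tpl P fK i m = sa P i m * sx P i * sD P i * sCm P m / sFm P m / fK"
  by (simp add: Tpl_def mult.commute)

lemma Eud_eq: "0 < sFm P m \<Longrightarrow> 0 < f \<Longrightarrow>
    Eud P y f i m = srhom P m * (sFm P m)\<^sup>2 * sa P i m * y * sS P i * sCm P m"
  by (simp add: Eud_def Tud_def power2_eq_square power3_eq_cube)

lemma Epl_eq: "0 < sFm P m \<Longrightarrow> 0 < fK \<Longrightarrow>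
    Epl P fK i m = srhom P m * (sFm P m)\<^sup>2 * sa P i m * sx P i * sD P i * sCm P m"
  by (simp add: Epl_def Tpl_def power2_eq_square power3_eq_cube)

lemma Texec_eq: "Texec P z f i =
    (\<Sum>m\<in>UNIV. sa P i m * z * slam P i * sCm P m / sFm P m / f) + (1 - z) * (slam P i * sCi P i / sFi P i)"
  by (simp add: Texec_def mult.commute mult.left_commute)

lemma concave_on_g_edge: "concave_on UNIV (g_edge P i)"
proof -
  have "convex_on UNIV (\<lambda>d. (1 - d / (sD P i + sS P i))\<^sup>2)"
    by (rule convex_on_affine_fun_compose[OF convex_power2]) (auto intro!: affine_fun_intros)
  then show ?thesis
    unfolding g_edge_def[abs_def] by (intro concave_on_diff concave_on_const[THEN iffD2]) auto
qed

lemma concave_on_acc: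
  assumes "0 \<le> z"
  shows "concave_on UNIV (\<lambda>y. acc P y z i)"
  unfolding acc_def using assms
  by (intro concave_on_add concave_on_const[THEN iffD2] concave_on_cmul
      concave_on_affine_fun_compose[OF concave_on_g_edge]) (auto intro!: affine_fun_intros)

definition user_obj51 ::
    "('i::finite, 'm::finite) dt_sys \<Rightarrow> real^'i \<Rightarrow> real^'i \<Rightarrow> real^'i \<Rightarrow> 'i \<Rightarrow> real \<Rightarrow> real" where
  "user_obj51 P b f z i y =
     sH P i * z$i * (\<Sum>m\<in>UNIV. Tul P y (b$i) i m + Tud P y (f$i) i m)
     + sE P * (\<Sum>m\<in>UNIV. z$i * (Eul P y (b$i) i m + Eud P y (f$i) i m))
     - sV P * acc P y (z$i) i"

lemma obj51_eq_sum: "obj51 P y b f z = (\<Sum>i\<in>UNIV. user_obj51 P b f z i (y$i))"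
  by (simp add: obj51_def user_obj51_def sum.distrib sum_subtractf sum_distrib_left)

lemma convex_on_user_obj51:
  assumes "standing P" "0 \<le> z$i"
  shows "convex_on UNIV (user_obj51 P b f z i)"
proof -
  have "affine_fun (\<lambda>y. sH P i * z$i * (\<Sum>m\<in>UNIV. Tul P y (b$i) i m + Tud P y (f$i) i m)
     + sE P * (\<Sum>m\<in>UNIV. z$i * (Eul P y (b$i) i m + Eud P y (f$i) i m)))"
    unfolding Tul_eq Eul_eq Tud_def Eud_def by (intro affine_fun_intros)
  moreover have "concave_on UNIV (\<lambda>y. sV P * acc P y (z$i) i)"
    using assms by (intro concave_on_cmul concave_on_acc standingD)
  ultimately show ?thesis
    unfolding user_obj51_def[abs_def] by (intro convex_on_diff affine_fun_imp_convex_on) auto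
qed

definition user_obj52 ::
    "('i::finite, 'm::finite) dt_sys \<Rightarrow> real^'i \<Rightarrow> real^'i \<Rightarrow> 'i \<Rightarrow> real \<Rightarrow> real" where
  "user_obj52 P y z i b =
     sH P i * z$i * (\<Sum>m\<in>UNIV. Tul P (y$i) b i m + Tofld P b i m)
     + sE P * (\<Sum>m\<in>UNIV. z$i * (Eul P (y$i) b i m + Eofld P b i m))"

lemma obj52_eq_sum: "obj52 P y b f z = (\<Sum>i\<in>UNIV. user_obj52 P y z i (b$i))"
  by (simp add: obj52_def user_obj52_def sum.distrib sum_distrib_left)

lemma convex_on_user_obj52:
  assumes "standing P" "0 \<le> y$i" "0 \<le> z$i"
  shows "convex_on {0<..} (user_obj52 P y z i)"
  unfolding user_obj52_def[abs_def] Tul_eq Eul_eq Tofld_eq Eofld_eq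
  using assms
  by (intro convex_on_add convex_on_cmul convex_on_sum_functions convex_on_divide_rate)
     (auto simp: standingD less_imp_le intro!: mult_nonneg_nonneg)

definition user_obj53 ::
    "('i::finite, 'm::finite) dt_sys \<Rightarrow> nat \<Rightarrow> nat \<Rightarrow> real^'i \<Rightarrow> real^'i \<Rightarrow> 'i \<Rightarrow> real \<Rightarrow> real" where
  "user_obj53 P t tau y z i f =
     sH P i * ((\<Sum>m\<in>UNIV. Tpl P (fTK P t tau f i) i m) / real (sK P)
               + z$i * (\<Sum>m\<in>UNIV. Tud P (y$i) f i m) + Texec P (z$i) f i)
     + sE P * ((\<Sum>m\<in>UNIV. Epl P (fTK P t tau f i) i m) / real (sK P)
               + (\<Sum>m\<in>UNIV. z$i * Eud P (y$i) f i m) + Eexec P (z$i) i)"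

lemma obj53_eq_sum: "obj53 P t tau y b f z = (\<Sum>i\<in>UNIV. user_obj53 P t tau y z i (f$i))"
  by (simp add: obj53_def user_obj53_def sum.distrib distrib_left sum_distrib_left)

lemma convex_on_user_obj53:
  assumes "standing P" "0 \<le> y$i" "0 \<le> z$i"
  shows "convex_on {0<..} (user_obj53 P t tau y z i)"
proof -
  have Tpl: "convex_on {0<..} (\<lambda>f. Tpl P (fTK P t tau f i) i m)" for m
  proof (cases "tau = t * sK P")
    case True
    show ?thesis
      unfolding fTK_def Tpl_eq if_P[OF True] using assms(1)
      by (intro convex_on_const_divide)
         (auto simp: standingD less_imp_le intro!: mult_nonneg_nonneg)
  qed (simp add: fTK_def convex_on_const)
  have Epl: "convex_on {0<..} (\<lambda>f. Epl P (fTK P t tau f i) i m)" for m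
  proof (rule convex_on_cong)
    show "convex_on {0<..} (\<lambda>_::real. srhom P m * (sFm P m)\<^sup>2 * sa P i m * sx P i * sD P i * sCm P m)"
      by (simp add: convex_on_const)
  qed (use standingD[OF assms(1)] in \<open>auto simp: Epl_eq fTK_def\<close>)
  have Eud: "convex_on {0<..} (\<lambda>f. z$i * Eud P (y$i) f i m)" for m
  proof (rule convex_on_cong)
    show "convex_on {0<..} (\<lambda>_::real. z$i * (srhom P m * (sFm P m)\<^sup>2 * sa P i m * y$i * sS P i * sCm P m))"
      by (simp add: convex_on_const)
  qed (use standingD[OF assms(1)] in \<open>auto simp: Eud_eq\<close>)
  show ?thesis
    unfolding user_obj53_def[abs_def] Tud_eq Texec_eq using assms
    by (intro convex_on_add convex_on_cmul convex_on_cdiv convex_on_sum_functions Tpl Epl Eud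
        convex_on_const[THEN iffD2] convex_on_const_divide)
       (auto simp: standingD less_imp_le intro!: mult_nonneg_nonneg)
qed

definition user_obj54 ::
    "('i::finite, 'm::finite) dt_sys \<Rightarrow> real^'i \<Rightarrow> real^'i \<Rightarrow> real^'i \<Rightarrow> 'i \<Rightarrow> real \<Rightarrow> real" where
  "user_obj54 P y b f i z =
     sH P i * (z * (\<Sum>m\<in>UNIV. Tul P (y$i) (b$i) i m + Tud P (y$i) (f$i) i m + Tofld P (b$i) i m)
               + Texec P z (f$i) i)
     + sE P * ((\<Sum>m\<in>UNIV. z * (Eul P (y$i) (b$i) i m + Eud P (y$i) (f$i) i m + Eofld P (b$i) i m))
               + Eexec P z i)
     - sV P * acc P (y$i) z i"

lemma obj54_eq_sum: "obj54 P y b f z = (\<Sum>i\<in>UNIV. user_obj54 P y b f i (z$i))"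
  by (simp add: obj54_def user_obj54_def sum.distrib sum_subtractf distrib_left sum_distrib_left)

lemma affine_fun_user_obj54: "affine_fun (user_obj54 P y b f i)"
  unfolding user_obj54_def[abs_def] Texec_def Eexec_def acc_def by (intro affine_fun_intros)

theorem theorem2:
  fixes P :: "('i::finite, 'm::finite) dt_sys"
    and t tau :: nat
    and y b f z :: "real^'i"
  assumes "standing P"
    and "t * sK P \<le> tau" and "tau < t * sK P + sK P"
    and "\<forall>i. 0 \<le> y$i \<and> y$i \<le> 1"
    and "\<forall>i. 0 < b$i \<and> b$i \<le> 1"
    and "\<forall>i. 0 < f$i \<and> f$i \<le> 1"
    and "\<forall>i. 0 \<le> z$i \<and> z$i \<le> 1"
  shows "(convex feas_unit \<and> convex_on feas_unit (\<lambda>y'. obj51 P y' b f z))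
       \<and> (convex (feas_coupled P) \<and> convex_on (feas_coupled P) (\<lambda>b'. obj52 P y b' f z))
       \<and> (convex (feas_coupled P) \<and> convex_on (feas_coupled P) (\<lambda>f'. obj53 P t tau y b f' z))
       \<and> (convex feas_unit \<and> convex_on feas_unit (\<lambda>z'. obj54 P y b f z'))"
proof -
  have y: "0 \<le> y$i" and z: "0 \<le> z$i" for i
    using assms(4,7) by auto
  have coupled_pos: "v$i \<in> {0<..}" if "v \<in> feas_coupled P" for v i
    using that by (simp add: feas_coupled_def)
  show ?thesis
    unfolding obj51_eq_sum obj52_eq_sum obj53_eq_sum obj54_eq_sum
    by (intro conjI convex_feas_unit convex_feas_coupled convex_on_sum_vec_nth[where S = UNIV]
        convex_on_sum_vec_nth[where S = "{0<..}"] convex_on_user_obj51 convex_on_user_obj52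
        convex_on_user_obj53 affine_fun_imp_convex_on affine_fun_user_obj54 coupled_pos assms(1) y z)
       auto
qed

end
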